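(* Let $m_1,m_2\ge3$ be coprime integers, let $n$ be an even integer divisible by $m_1$, and let $Q\in C(n,m_1,m_2)$ with $Ch_1(Q)\ne0$. Then either $Ch_2(Q)=Ch_3(Q)=0$, or $Ch_2(Q)=Ch_4(Q)=Ch_5(Q)=0$.
   Context: $T_k$ denotes the Chebyshev polynomial of the first kind of degree $k$, $T_k(\cos\phi)=\cos(k\phi)$. Every real polynomial $Q$ of degree $n$ can be uniquely written as $Q=\sum_{k=0}^n d_kT_k$ with $d_k\in\mathbb{R}$; set $Ch_i(Q)=d_{n-i}$ for $0\le i\le n$. $C(n,m_1,m_2)$ denotes the set of real polynomials $Q=\sum_{k=0}^n d_kT_k$ with $d_n\ne0$ and such that $d_k=0$ unless $k$ is divisible by $m_1$ or by $m_2$. *)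

theory Defs
  imports "HOL-Computational_Algebra.Polynomial"
begin

text \<open>Chebyshev polynomials of the first kind, T_0 = 1, T_1 = X, T_(k+2) = 2 X T_(k+1) - T_k;
  these satisfy T_k(cos phi) = cos(k phi).\<close>
fun cheb_T :: "nat \<Rightarrow> real poly" where
  "cheb_T 0 = 1"
| "cheb_T (Suc 0) = [:0, 1:]"
| "cheb_T (Suc (Suc k)) = [:0, 2:] * cheb_T (Suc k) - cheb_T k"

definition cheb_coeffs :: "real poly \<Rightarrow> nat \<Rightarrow> real" where
  "cheb_coeffs Q = (THE d. (\<forall>k > degree Q. d k = 0) \<and>
                        Q = (\<Sum>k\<le>degree Q. smult (d k) (cheb_T k)))"

definition Ch :: "nat \<Rightarrow> real poly \<Rightarrow> real" where
  "Ch i Q = (if i \<le> degree Q then cheb_coeffs Q (degree Q - i) else 0)"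

definition C_set :: "nat \<Rightarrow> nat \<Rightarrow> nat \<Rightarrow> real poly set" where
  "C_set n m1 m2 = {Q. \<exists>d :: nat \<Rightarrow> real. Q = (\<Sum>k\<le>n. smult (d k) (cheb_T k)) \<and> d n \<noteq> 0 \<and>
                      (\<forall>k\<le>n. \<not> (m1 dvd k \<or> m2 dvd k) \<longrightarrow> d k = 0)}"

end

theory Submission
  imports Defs
begin

(* The Chebyshev polynomial T_k has degree exactly k, so the T_k form a
   triangular basis of the real polynomials: an expansion Q = sum_{k<=n} d_k T_k with d_n ~= 0
   has degree n, and its coefficients are unique, whence Ch_i(Q) = d_(n-i).  For Q in
   C(n,m1,m2) this means Ch_i(Q) ~= 0 only if m1 | n-i or m2 | n-i.  If moreover m1 | n and
   Ch_1(Q) ~= 0, then m1 cannot divide n-1, so m2 | n-1; consequently Ch_j(Q) ~= 0 (j >= 1)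
   forces m1 | j or m2 | j-1, and m2 is odd because n-1 is odd. *)

lemma cheb_T_degree_lead:
  "degree (cheb_T k) \<le> k \<and> coeff (cheb_T k) k = (if k = 0 then 1 else 2 ^ (k - 1))"
proof (induction k rule: cheb_T.induct)
  case (3 k)
  have "degree ([:0, 2:] * cheb_T (Suc k)) \<le> Suc (Suc k)"
    using 3 degree_mult_le[of "[:0, 2::real:]" "cheb_T (Suc k)"] by simp
  moreover have "coeff (cheb_T k) (Suc (Suc k)) = 0"
    using 3 by (simp add: coeff_eq_0)
  ultimately show ?case
    using 3 by (auto intro: degree_diff_le)
qed simp_all

lemma coeff_cheb_T_nonzero: "coeff (cheb_T k) k \<noteq> 0"
  using cheb_T_degree_lead[of k] by simp

lemma degree_cheb_T: "degree (cheb_T k) = k"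
  using cheb_T_degree_lead[of k] coeff_cheb_T_nonzero[of k] le_degree by (metis le_antisym)

lemma degree_cheb_sum: "degree (\<Sum>k\<le>N. smult (c k) (cheb_T k)) \<le> N"
  by (rule degree_sum_le) (auto intro: order.trans[OF degree_smult_le] simp: degree_cheb_T)

lemma coeff_cheb_sum_top:
  "coeff (\<Sum>k\<le>N. smult (c k) (cheb_T k)) N = c N * coeff (cheb_T N) N"
proof -
  have "coeff (\<Sum>k\<le>N. smult (c k) (cheb_T k)) N = (\<Sum>k\<le>N. c k * coeff (cheb_T k) N)"
    by (simp add: coeff_sum)
  also have "\<dots> = (\<Sum>k\<in>{N}. c k * coeff (cheb_T k) N)"
    by (rule sum.mono_neutral_right) (auto simp: coeff_eq_0 degree_cheb_T)
  finally show ?thesis by simp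
qed

(* Linear independence of T_0, ..., T_N: peel off the top coefficient and induct. *)
lemma cheb_sum_eq_0_imp_coeffs_0:
  assumes "(\<Sum>k\<le>N. smult (c k) (cheb_T k)) = 0" and "k \<le> N"
  shows "c k = 0"
  using assms
proof (induction N arbitrary: k)
  case (Suc N)
  have "c (Suc N) * coeff (cheb_T (Suc N)) (Suc N) = 0"
    using coeff_cheb_sum_top[of c "Suc N"] Suc.prems(1) by (metis coeff_0)
  then have top: "c (Suc N) = 0"
    using coeff_cheb_T_nonzero by simp
  then have "(\<Sum>k\<le>N. smult (c k) (cheb_T k)) = 0"
    using Suc.prems(1) by simp
  then show ?case
    using Suc top by (cases "k = Suc N") auto
qed simp

lemma cheb_sum_coeffs_unique:
  assumes "(\<Sum>k\<le>N. smult (a k) (cheb_T k)) = (\<Sum>k\<le>N. smult (b k) (cheb_T k))"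
    and "k \<le> N"
  shows "a k = b k"
proof -
  have "(\<Sum>k\<le>N. smult (a k - b k) (cheb_T k)) = 0"
    using assms(1) by (simp add: smult_diff_left sum_subtractf)
  from cheb_sum_eq_0_imp_coeffs_0[OF this assms(2)] show ?thesis by simp
qed

lemma cheb_expansion:
  assumes Q: "Q = (\<Sum>k\<le>n. smult (d k) (cheb_T k))" and top: "d n \<noteq> 0"
  shows "degree Q = n" and "cheb_coeffs Q = (\<lambda>k. if k \<le> n then d k else 0)"
proof -
  have "coeff Q n \<noteq> 0"
    using Q coeff_cheb_sum_top[of d n] top coeff_cheb_T_nonzero by simp
  then show deg: "degree Q = n"
    using Q degree_cheb_sum[of d n] le_degree by (metis le_antisym)
  define e where "e = (\<lambda>k. if k \<le> n then d k else 0)"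
  have Qe: "Q = (\<Sum>k\<le>n. smult (e k) (cheb_T k))"
    using Q by (simp add: e_def)
  show "cheb_coeffs Q = e"
    unfolding cheb_coeffs_def deg
  proof (rule the_equality)
    show "(\<forall>k>n. e k = 0) \<and> Q = (\<Sum>k\<le>n. smult (e k) (cheb_T k))"
      using Qe by (simp add: e_def)
  next
    fix d' assume d': "(\<forall>k>n. d' k = 0) \<and> Q = (\<Sum>k\<le>n. smult (d' k) (cheb_T k))"
    show "d' = e"
    proof
      fix k show "d' k = e k"
        using d' Qe cheb_sum_coeffs_unique[of d' n e k] by (cases "k \<le> n") (auto simp: e_def)
    qed
  qed
qed

lemma Ch_cheb_expansion:
  assumes "Q = (\<Sum>k\<le>n. smult (d k) (cheb_T k))" and "d n \<noteq> 0"
  shows "Ch i Q = (if i \<le> n then d (n - i) else 0)"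
  unfolding Ch_def cheb_expansion[OF assms] by simp

lemma C_set_Ch_nonzero:
  assumes "Q \<in> C_set n m1 m2" and "Ch i Q \<noteq> 0"
  shows "i \<le> n \<and> (m1 dvd n - i \<or> m2 dvd n - i)"
proof -
  obtain d where Q: "Q = (\<Sum>k\<le>n. smult (d k) (cheb_T k))" and "d n \<noteq> 0"
    and gaps: "\<forall>k\<le>n. \<not> (m1 dvd k \<or> m2 dvd k) \<longrightarrow> d k = 0"
    using assms(1) unfolding C_set_def by blast
  with Ch_cheb_expansion[OF Q] have "Ch i Q = (if i \<le> n then d (n - i) else 0)"
    by blast
  then show ?thesis
    using assms(2) gaps[rule_format, of "n - i"] by (auto split: if_splits)
qed

(* When m1 | n and Ch_1(Q) ~= 0, the index n-1 must come from m2; shifting by n-1 turns the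
   constraint above into one on j alone. *)
lemma C_set_Ch_support:
  assumes "Q \<in> C_set n m1 m2" and "m1 dvd n" and "m1 \<ge> 2" and "Ch 1 Q \<noteq> 0"
  shows "1 \<le> n" and "m2 dvd n - 1"
    and "\<And>j. 1 \<le> j \<Longrightarrow> Ch j Q \<noteq> 0 \<Longrightarrow> m1 dvd j \<or> m2 dvd j - 1"
proof -
  have n1: "1 \<le> n" and "m1 dvd n - 1 \<or> m2 dvd n - 1"
    using C_set_Ch_nonzero[OF assms(1,4)] by auto
  moreover have "\<not> m1 dvd n - 1"
  proof
    assume "m1 dvd n - 1"
    then have "m1 dvd n - (n - 1)"
      using assms(2) dvd_diff_nat by blast
    with n1 assms(3) show False by simp
  qed
  ultimately show "1 \<le> n" and m2: "m2 dvd n - 1" by auto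
  fix j assume j: "1 \<le> j" and "Ch j Q \<noteq> 0"
  then have jn: "j \<le> n" and index: "m1 dvd n - j \<or> m2 dvd n - j"
    using C_set_Ch_nonzero[OF assms(1)] by auto
  from index show "m1 dvd j \<or> m2 dvd j - 1"
  proof
    assume "m1 dvd n - j"
    then have "m1 dvd n - (n - j)" using assms(2) dvd_diff_nat by blast
    with jn show ?thesis by simp
  next
    assume "m2 dvd n - j"
    then have "m2 dvd (n - 1) - (n - j)" using m2 dvd_diff_nat by blast
    moreover have "(n - 1) - (n - j) = j - 1" using j jn by simp
    ultimately show ?thesis by simp
  qed
qed

theorem corollary3p2:
  fixes m1 m2 n :: nat and Q :: "real poly"
  assumes "m1 \<ge> 3" and "m2 \<ge> 3" and "coprime m1 m2"
    and "even n" and "m1 dvd n"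
    and "Q \<in> C_set n m1 m2"
    and "Ch 1 Q \<noteq> 0"
  shows "(Ch 2 Q = 0 \<and> Ch 3 Q = 0) \<or> (Ch 2 Q = 0 \<and> Ch 4 Q = 0 \<and> Ch 5 Q = 0)"
proof -
  have m1: "m1 \<ge> 2" using assms(1) by simp
  note support = C_set_Ch_support[OF assms(6,5) m1 assms(7)]
  have vanish: "Ch j Q = 0" if "1 \<le> j" "\<not> m1 dvd j" "\<not> m2 dvd j - 1" for j
    using support(3)[of j] that by blast
  have "odd (n - 1)" using assms(4) support(1) by simp
  then have odd_m2: "odd m2" using support(2) dvd_trans by blast
  have "\<not> m dvd j" if "3 \<le> m" "0 < j" "j < 3" for m j :: nat
    using that nat_dvd_not_less[of j m] by simp
  then have Ch2: "Ch 2 Q = 0"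
    using vanish[of 2] assms(1,2) by simp
  show ?thesis
  proof (cases "m1 = 3")
    case True
    have "m2 \<noteq> 3" using assms(3) True by auto
    moreover have "m2 \<noteq> 4" using odd_m2 by auto
    ultimately have "\<not> m2 dvd 3" and "\<not> m2 dvd 4"
      using assms(2) by (auto dest!: dvd_imp_le)
    then show ?thesis
      using Ch2 True vanish[of 4] vanish[of 5] by simp
  next
    case False
    then have "\<not> m1 dvd 3" and "\<not> m2 dvd 2"
      using assms(1,2) by (auto dest!: dvd_imp_le)
    then show ?thesis
      using Ch2 vanish[of 3] by simp
  qed
qed

end
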